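(* Let $\mathbf{V}$ be a vertical weak adhesive HLR category with respect to a stable system of monics $\mathcal{M}$. If pushouts along $\mathcal{M}$-morphisms are stable under pullbacks in $\mathbf{V}$, then $\mathbf{V}$ is also a horizontal weak adhesive HLR category with respect to $\mathcal{M}$ (and hence a weak adhesive HLR category).
   Context: A stable system of monics $\mathcal{M}$: class of monomorphisms containing all isomorphisms, closed under composition, stable under pullback. Van Kampen (VK) square: a pushout square (bottom face) such that for every commutative cube over it whose two back vertical faces (those containing the vertical morphism into the apex of the span) are pullbacks, the top face is a pushout iff the two front vertical faces are pullbacks. A vertical weak VK square: the same condition required only for cubes whose four vertical morphisms are in $\mathcal{M}$. $\mathbf{V}$ is a vertical weak adhesive HLR category w.r.t. $\mathcal{M}$ if (V-i) it has pullbacks of cospans $A\to B\leftarrow B'$ with $B'\to B$ in $\mathcal{M}$, (V-ii) it has pushouts of spans $A\leftarrow B\to B'$ with $B\to B'$ in $\mathcal{M}$, and in such pushouts the morphism opposite to the $\mathcal{M}$-leg is in $\mathcal{M}$, (V-iii) pushouts along $\mathcal{M}$-morphisms are vertical weak VK squares. It is a horizontal weak adhesive HLR category w.r.t. $\mathcal{M}$ if it satisfies (V-i), (V-ii) and (H-iii): every pushout square all four of whose morphisms are in $\mathcal{M}$ is a VK square. A weak adhesive HLR category is one that is both. "Pushouts along $\mathcal{M}$-morphisms are stable under pullbacks": for every commutative cube whose bottom face is a pushout of a span with one leg in $\mathcal{M}$ and whose four vertical faces are pullbacks (vertical morphisms arbitrary), the top face is a pushout. *)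

theory Defs
  imports Main
begin

text \<open>A (small-or-large) category given explicitly by a set of objects, a set of
arrows, domain/codomain maps, composition (Comp g f = g after f) and identities.\<close>

record ('o, 'a) cat =
  Ob :: "'o set"
  Arr :: "'a set"
  Dom :: "'a \<Rightarrow> 'o"
  Cod :: "'a \<Rightarrow> 'o"
  Comp :: "'a \<Rightarrow> 'a \<Rightarrow> 'a"
  Id :: "'o \<Rightarrow> 'a"

definition category :: "('o, 'a) cat \<Rightarrow> bool" where
  "category C \<longleftrightarrow>
     (\<forall>f\<in>Arr C. Dom C f \<in> Ob C \<and> Cod C f \<in> Ob C) \<and>
     (\<forall>x\<in>Ob C. Id C x \<in> Arr C \<and> Dom C (Id C x) = x \<and> Cod C (Id C x) = x) \<and>
     (\<forall>f\<in>Arr C. \<forall>g\<in>Arr C. Cod C f = Dom C g \<longrightarrow>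
        Comp C g f \<in> Arr C \<and> Dom C (Comp C g f) = Dom C f \<and> Cod C (Comp C g f) = Cod C g) \<and>
     (\<forall>f\<in>Arr C. \<forall>g\<in>Arr C. \<forall>h\<in>Arr C. Cod C f = Dom C g \<longrightarrow> Cod C g = Dom C h \<longrightarrow>
        Comp C h (Comp C g f) = Comp C (Comp C h g) f) \<and>
     (\<forall>f\<in>Arr C. Comp C f (Id C (Dom C f)) = f \<and> Comp C (Id C (Cod C f)) f = f)"

definition is_mono :: "('o, 'a) cat \<Rightarrow> 'a \<Rightarrow> bool" where
  "is_mono C m \<longleftrightarrow> m \<in> Arr C \<and>
     (\<forall>f\<in>Arr C. \<forall>g\<in>Arr C. Cod C f = Dom C m \<longrightarrow> Cod C g = Dom C m \<longrightarrow> Dom C f = Dom C g \<longrightarrow>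
        Comp C m f = Comp C m g \<longrightarrow> f = g)"

definition iso :: "('o, 'a) cat \<Rightarrow> 'a \<Rightarrow> bool" where
  "iso C f \<longleftrightarrow> f \<in> Arr C \<and>
     (\<exists>g\<in>Arr C. Dom C g = Cod C f \<and> Cod C g = Dom C f \<and>
        Comp C g f = Id C (Dom C f) \<and> Comp C f g = Id C (Cod C f))"

text \<open>Commutative square
   A --f--> B
   |g       |h
   v        v
   C --k--> D      with  h o f = k o g.\<close>

definition commsq :: "('o, 'a) cat \<Rightarrow> 'a \<Rightarrow> 'a \<Rightarrow> 'a \<Rightarrow> 'a \<Rightarrow> bool" where
  "commsq C f g h k \<longleftrightarrow> f \<in> Arr C \<and> g \<in> Arr C \<and> h \<in> Arr C \<and> k \<in> Arr C \<and>
     Dom C f = Dom C g \<and> Cod C f = Dom C h \<and> Cod C g = Dom C k \<and> Cod C h = Cod C k \<and>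
     Comp C h f = Comp C k g"

definition pullback :: "('o, 'a) cat \<Rightarrow> 'a \<Rightarrow> 'a \<Rightarrow> 'a \<Rightarrow> 'a \<Rightarrow> bool" where
  "pullback C f g h k \<longleftrightarrow> commsq C f g h k \<and>
     (\<forall>x\<in>Arr C. \<forall>y\<in>Arr C. Dom C x = Dom C y \<longrightarrow> Cod C x = Dom C h \<longrightarrow> Cod C y = Dom C k \<longrightarrow>
        Comp C h x = Comp C k y \<longrightarrow>
        (\<exists>!u. u \<in> Arr C \<and> Dom C u = Dom C x \<and> Cod C u = Dom C f \<and>
              Comp C f u = x \<and> Comp C g u = y))"

definition pushout :: "('o, 'a) cat \<Rightarrow> 'a \<Rightarrow> 'a \<Rightarrow> 'a \<Rightarrow> 'a \<Rightarrow> bool" where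
  "pushout C f g h k \<longleftrightarrow> commsq C f g h k \<and>
     (\<forall>x\<in>Arr C. \<forall>y\<in>Arr C. Cod C x = Cod C y \<longrightarrow> Dom C x = Cod C f \<longrightarrow> Dom C y = Cod C g \<longrightarrow>
        Comp C x f = Comp C y g \<longrightarrow>
        (\<exists>!u. u \<in> Arr C \<and> Dom C u = Cod C h \<and> Cod C u = Cod C x \<and>
              Comp C u h = x \<and> Comp C u k = y))"

definition stable_system_of_monics :: "('o, 'a) cat \<Rightarrow> 'a set \<Rightarrow> bool" where
  "stable_system_of_monics C M \<longleftrightarrow>
     (\<forall>m\<in>M. is_mono C m) \<and>
     (\<forall>f. iso C f \<longrightarrow> f \<in> M) \<and>
     (\<forall>f\<in>M. \<forall>g\<in>M. Cod C f = Dom C g \<longrightarrow> Comp C g f \<in> M) \<and>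
     (\<forall>f g h k. pullback C f g h k \<longrightarrow> k \<in> M \<longrightarrow> f \<in> M)"

text \<open>Bottom face: A --f--> B, A --g--> C, B --h--> D, C --k--> D.
  Top face: A' --f'--> B', A' --g'--> C', B' --h'--> D', C' --k'--> D'.
  Vertical morphisms a : A' -> A, b : B' -> B, c : C' -> C, d : D' -> D.\<close>
definition cube :: "('o, 'a) cat \<Rightarrow> 'a \<Rightarrow> 'a \<Rightarrow> 'a \<Rightarrow> 'a \<Rightarrow> 'a \<Rightarrow> 'a \<Rightarrow> 'a \<Rightarrow> 'a
                     \<Rightarrow> 'a \<Rightarrow> 'a \<Rightarrow> 'a \<Rightarrow> 'a \<Rightarrow> bool" where
  "cube C f g h k f' g' h' k' a b c d \<longleftrightarrow>
     commsq C f g h k \<and> commsq C f' g' h' k' \<and>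
     commsq C f' a b f \<and> commsq C g' a c g \<and>
     commsq C h' b d h \<and> commsq C k' c d k"

text \<open>VK condition for the bottom square, restricted to cubes whose vertical
  morphisms satisfy P. Back faces (containing a) are (f',a,b,f) and (g',a,c,g);
  front faces are (h',b,d,h) and (k',c,d,k).\<close>
definition VK_wrt :: "('o, 'a) cat \<Rightarrow> ('a \<Rightarrow> 'a \<Rightarrow> 'a \<Rightarrow> 'a \<Rightarrow> bool)
                        \<Rightarrow> 'a \<Rightarrow> 'a \<Rightarrow> 'a \<Rightarrow> 'a \<Rightarrow> bool" where
  "VK_wrt C P f g h k \<longleftrightarrow> pushout C f g h k \<and>
     (\<forall>f' g' h' k' a b c d.
        cube C f g h k f' g' h' k' a b c d \<longrightarrow> P a b c d \<longrightarrow>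
        pullback C f' a b f \<longrightarrow> pullback C g' a c g \<longrightarrow>
        (pushout C f' g' h' k' \<longleftrightarrow> (pullback C h' b d h \<and> pullback C k' c d k)))"

definition VK_square :: "('o, 'a) cat \<Rightarrow> 'a \<Rightarrow> 'a \<Rightarrow> 'a \<Rightarrow> 'a \<Rightarrow> bool" where
  "VK_square C f g h k \<longleftrightarrow> VK_wrt C (\<lambda>a b c d. True) f g h k"

definition vertical_weak_VK_square :: "('o, 'a) cat \<Rightarrow> 'a set \<Rightarrow> 'a \<Rightarrow> 'a \<Rightarrow> 'a \<Rightarrow> 'a \<Rightarrow> bool" where
  "vertical_weak_VK_square C M f g h k \<longleftrightarrow>
     VK_wrt C (\<lambda>a b c d. a \<in> M \<and> b \<in> M \<and> c \<in> M \<and> d \<in> M) f g h k"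

definition has_M_pullbacks :: "('o, 'a) cat \<Rightarrow> 'a set \<Rightarrow> bool" where
  "has_M_pullbacks C M \<longleftrightarrow>
     (\<forall>h\<in>Arr C. \<forall>k\<in>M. Cod C h = Cod C k \<longrightarrow> (\<exists>f g. pullback C f g h k))"

definition has_M_pushouts :: "('o, 'a) cat \<Rightarrow> 'a set \<Rightarrow> bool" where
  "has_M_pushouts C M \<longleftrightarrow>
     (\<forall>f\<in>M. \<forall>g\<in>Arr C. Dom C f = Dom C g \<longrightarrow> (\<exists>h k. pushout C f g h k)) \<and>
     (\<forall>f g h k. pushout C f g h k \<longrightarrow> f \<in> M \<longrightarrow> k \<in> M)"

definition vertical_weak_adhesive_HLR :: "('o, 'a) cat \<Rightarrow> 'a set \<Rightarrow> bool" where
  "vertical_weak_adhesive_HLR C M \<longleftrightarrow>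
     has_M_pullbacks C M \<and> has_M_pushouts C M \<and>
     (\<forall>f g h k. pushout C f g h k \<longrightarrow> f \<in> M \<longrightarrow> vertical_weak_VK_square C M f g h k)"

definition horizontal_weak_adhesive_HLR :: "('o, 'a) cat \<Rightarrow> 'a set \<Rightarrow> bool" where
  "horizontal_weak_adhesive_HLR C M \<longleftrightarrow>
     has_M_pullbacks C M \<and> has_M_pushouts C M \<and>
     (\<forall>f g h k. pushout C f g h k \<longrightarrow> f \<in> M \<longrightarrow> g \<in> M \<longrightarrow> h \<in> M \<longrightarrow> k \<in> M \<longrightarrow>
        VK_square C f g h k)"

definition weak_adhesive_HLR :: "('o, 'a) cat \<Rightarrow> 'a set \<Rightarrow> bool" where
  "weak_adhesive_HLR C M \<longleftrightarrow>
     vertical_weak_adhesive_HLR C M \<and> horizontal_weak_adhesive_HLR C M"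

definition M_pushouts_pullback_stable :: "('o, 'a) cat \<Rightarrow> 'a set \<Rightarrow> bool" where
  "M_pushouts_pullback_stable C M \<longleftrightarrow>
     (\<forall>f g h k f' g' h' k' a b c d.
        cube C f g h k f' g' h' k' a b c d \<longrightarrow> pushout C f g h k \<longrightarrow> f \<in> M \<longrightarrow>
        pullback C f' a b f \<longrightarrow> pullback C g' a c g \<longrightarrow>
        pullback C h' b d h \<longrightarrow> pullback C k' c d k \<longrightarrow>
        pushout C f' g' h' k')"

end

theory Submission
  imports Defs
begin

text \<open>
  One half of the VK property (pullback front faces give a pushout top face) is exactly the
  stability of pushouts along \<open>M\<close>-morphisms. For the other half, let the top face of a
  cube over a pushout \<open>f, g, h, k\<close> of \<open>M\<close>-morphisms be a pushout, and let its back
  faces be pullbacks. Pulling the bottom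
  square back along \<open>d\<close> gives a second cube with the same \<open>d\<close> whose four vertical
  faces are pullbacks; by stability its top \<open>f2, g2, h2, k2\<close> is a pushout along the
  \<open>M\<close>-morphism \<open>f2\<close>. The original top factors through it by comparison morphisms
  \<open>\<alpha>, \<beta>, \<gamma>, id\<close>. These lie in \<open>M\<close>: the composites \<open>h2 \<circ> \<beta> = h'\<close>,
  \<open>k2 \<circ> \<gamma> = k'\<close> and \<open>f2 \<circ> \<alpha> = \<beta> \<circ> f'\<close> are in \<open>M\<close>, and \<open>x\<close> is in \<open>M\<close> as
  soon as \<open>m \<circ> x\<close> is, for a monic \<open>m\<close>, because \<open>x\<close> is then a pullback of \<open>m \<circ> x\<close>
  along \<open>m\<close>. So the vertical weak VK property of the new top applies to the comparison
  cube and makes \<open>h', \<beta>, id, h2\<close> a pullback; pasting it with the pullback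
  \<open>h2, b2, d, h\<close> shows that the front face \<open>h', b, d, h\<close> is a pullback.
\<close>

lemma commsqD:
  assumes "commsq C f g h k"
  shows "f \<in> Arr C" "g \<in> Arr C" "h \<in> Arr C" "k \<in> Arr C"
    "Dom C g = Dom C f" "Dom C h = Cod C f" "Dom C k = Cod C g" "Cod C k = Cod C h"
    "Comp C h f = Comp C k g"
  using assms unfolding commsq_def by auto

lemma commsq_sym: "commsq C f g h k \<Longrightarrow> commsq C g f k h"
  unfolding commsq_def by auto

lemma cubeD:
  assumes "cube C f g h k f' g' h' k' a b c d"
  shows "commsq C f g h k" "commsq C f' g' h' k'" "commsq C f' a b f" "commsq C g' a c g"
    "commsq C h' b d h" "commsq C k' c d k"
  using assms unfolding cube_def by blast+

lemma cube_sym: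
  "cube C f g h k f' g' h' k' a b c d \<Longrightarrow> cube C g f k h g' f' k' h' a c b d"
  unfolding cube_def by (auto dest: commsq_sym)

lemma pullbackI:
  assumes "commsq C f g h k"
    and "\<And>x y. \<lbrakk>x \<in> Arr C; y \<in> Arr C; Dom C x = Dom C y;
           Cod C x = Dom C h; Cod C y = Dom C k; Comp C h x = Comp C k y\<rbrakk> \<Longrightarrow>
           \<exists>u\<in>Arr C. Dom C u = Dom C x \<and> Cod C u = Dom C f \<and>
             Comp C f u = x \<and> Comp C g u = y"
    and "\<And>u v. \<lbrakk>u \<in> Arr C; v \<in> Arr C; Dom C u = Dom C v;
           Cod C u = Dom C f; Cod C v = Dom C f;
           Comp C f u = Comp C f v; Comp C g u = Comp C g v\<rbrakk> \<Longrightarrow> u = v"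
  shows "pullback C f g h k"
  unfolding pullback_def
proof (intro conjI ballI impI)
  fix x y
  assume "x \<in> Arr C" "y \<in> Arr C" "Dom C x = Dom C y" "Cod C x = Dom C h" "Cod C y = Dom C k"
    "Comp C h x = Comp C k y"
  with assms(2) obtain u where "u \<in> Arr C" "Dom C u = Dom C x" "Cod C u = Dom C f"
    "Comp C f u = x" "Comp C g u = y"
    by blast
  with assms(3) show "\<exists>!u. u \<in> Arr C \<and> Dom C u = Dom C x \<and> Cod C u = Dom C f \<and>
      Comp C f u = x \<and> Comp C g u = y"
    by (intro ex1I[of _ u]) auto
qed (fact assms(1))

lemma pullback_commsq: "pullback C f g h k \<Longrightarrow> commsq C f g h k"
  unfolding pullback_def by blast

lemma pullback_lift:
  assumes "pullback C f g h k" "x \<in> Arr C" "y \<in> Arr C" "Dom C x = Dom C y" "Cod C x = Dom C h"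
    "Cod C y = Dom C k" "Comp C h x = Comp C k y"
  obtains u where "u \<in> Arr C" "Dom C u = Dom C x" "Cod C u = Dom C f"
    "Comp C f u = x" "Comp C g u = y"
  using assms(1)[unfolded pullback_def, THEN conjunct2, rule_format, OF assms(2-7)] that by blast

lemma pushout_sym:
  assumes po: "pushout C f g h k"
  shows "pushout C g f k h"
  unfolding pushout_def
proof (intro conjI ballI impI)
  have sq: "commsq C f g h k"
    using po unfolding pushout_def by blast
  then show "commsq C g f k h"
    by (rule commsq_sym)
  fix x y
  assume xy: "x \<in> Arr C" "y \<in> Arr C" "Cod C x = Cod C y" "Dom C x = Cod C g" "Dom C y = Cod C f"
    "Comp C x g = Comp C y f"
  then have "\<exists>!u. u \<in> Arr C \<and> Dom C u = Cod C h \<and> Cod C u = Cod C y \<and>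
      Comp C u h = y \<and> Comp C u k = x"
    using po[unfolded pushout_def, THEN conjunct2, rule_format, of y x] by simp
  then show "\<exists>!u. u \<in> Arr C \<and> Dom C u = Cod C k \<and> Cod C u = Cod C x \<and>
      Comp C u k = x \<and> Comp C u h = y"
    using commsqD(8)[OF sq] xy(3) by (simp add: conj_commute)
qed

context
  fixes C :: "('o, 'a) cat"
  assumes cat: "category C"
begin

lemma Dom_in_Ob: "f \<in> Arr C \<Longrightarrow> Dom C f \<in> Ob C"
  using cat unfolding category_def by blast

lemma Id_in_Arr [simp]: "x \<in> Ob C \<Longrightarrow> Id C x \<in> Arr C"
  and Dom_Id [simp]: "x \<in> Ob C \<Longrightarrow> Dom C (Id C x) = x"
  and Cod_Id [simp]: "x \<in> Ob C \<Longrightarrow> Cod C (Id C x) = x"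
  using cat unfolding category_def by blast+

lemma Comp_in_Arr [simp]:
    "f \<in> Arr C \<Longrightarrow> g \<in> Arr C \<Longrightarrow> Cod C f = Dom C g \<Longrightarrow> Comp C g f \<in> Arr C"
  and Dom_Comp [simp]:
    "f \<in> Arr C \<Longrightarrow> g \<in> Arr C \<Longrightarrow> Cod C f = Dom C g \<Longrightarrow> Dom C (Comp C g f) = Dom C f"
  and Cod_Comp [simp]:
    "f \<in> Arr C \<Longrightarrow> g \<in> Arr C \<Longrightarrow> Cod C f = Dom C g \<Longrightarrow> Cod C (Comp C g f) = Cod C g"
  using cat unfolding category_def by blast+

lemma Comp_assoc:
  "f \<in> Arr C \<Longrightarrow> g \<in> Arr C \<Longrightarrow> h \<in> Arr C \<Longrightarrow> Cod C f = Dom C g \<Longrightarrow>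
   Cod C g = Dom C h \<Longrightarrow> Comp C h (Comp C g f) = Comp C (Comp C h g) f"
  using cat unfolding category_def by blast

lemma Comp_Id_left: "f \<in> Arr C \<Longrightarrow> Cod C f = x \<Longrightarrow> Comp C (Id C x) f = f"
  and Comp_Id_right: "f \<in> Arr C \<Longrightarrow> Dom C f = x \<Longrightarrow> Comp C f (Id C x) = f"
  using cat unfolding category_def by blast+

lemma iso_Id: "x \<in> Ob C \<Longrightarrow> iso C (Id C x)"
  unfolding iso_def by (auto intro!: bexI[of _ "Id C x"] simp: Comp_Id_left)

lemma commsq_precomp:
  assumes "commsq C f g h k" "u \<in> Arr C" "Cod C u = Dom C f"
  shows "Comp C h (Comp C f u) = Comp C k (Comp C g u)"
  using commsqD[OF assms(1)] assms(2,3) Comp_assoc[of u f h] Comp_assoc[of u g k] by simp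

lemma pullback_jointly_monic:
  assumes pb: "pullback C f g h k" and "u \<in> Arr C" "v \<in> Arr C" "Dom C u = Dom C v"
    "Cod C u = Dom C f" "Cod C v = Dom C f" "Comp C f u = Comp C f v" "Comp C g u = Comp C g v"
  shows "u = v"
proof -
  note sq = commsqD[OF pullback_commsq[OF pb]]
  have "\<exists>!w. w \<in> Arr C \<and> Dom C w = Dom C u \<and> Cod C w = Dom C f \<and>
      Comp C f w = Comp C f u \<and> Comp C g w = Comp C g u"
    using pb[unfolded pullback_def, THEN conjunct2, rule_format, of "Comp C f u" "Comp C g u"]
      commsq_precomp[OF pullback_commsq[OF pb]] assms sq
    by simp
  then show ?thesis
    using assms by (metis (no_types, lifting))
qed

lemma pullback_sym: "pullback C f g h k \<Longrightarrow> pullback C g f k h"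
proof (rule pullbackI)
  assume pb: "pullback C f g h k"
  show "commsq C g f k h"
    using commsq_sym[OF pullback_commsq[OF pb]] .
  show "\<exists>u\<in>Arr C. Dom C u = Dom C x \<and> Cod C u = Dom C g \<and> Comp C g u = x \<and> Comp C f u = y"
    if xy: "x \<in> Arr C" "y \<in> Arr C" "Dom C x = Dom C y" "Cod C x = Dom C k"
      "Cod C y = Dom C h" "Comp C k x = Comp C h y" for x y
  proof -
    obtain u where "u \<in> Arr C" "Dom C u = Dom C y" "Cod C u = Dom C f"
      "Comp C f u = y" "Comp C g u = x"
      using pullback_lift[OF pb xy(2,1) xy(3)[symmetric] xy(5,4) xy(6)[symmetric]] .
    then show ?thesis
      using xy commsqD[OF pullback_commsq[OF pb]] by auto
  qed
  show "u = v" if "u \<in> Arr C" "v \<in> Arr C" "Dom C u = Dom C v" "Cod C u = Dom C g"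
      "Cod C v = Dom C g" "Comp C g u = Comp C g v" "Comp C f u = Comp C f v" for u v
    using pullback_jointly_monic[OF pb] that commsqD[OF pullback_commsq[OF pb]] by simp
qed

lemma pullback_paste:
  assumes s1: "pullback C t l1 r1 m" and s2: "pullback C m l2 r2 b"
  shows "pullback C t (Comp C l2 l1) (Comp C r2 r1) b"
proof (rule pullbackI)
  note q1 = commsqD[OF pullback_commsq[OF s1]] and q2 = commsqD[OF pullback_commsq[OF s2]]
  have "Comp C (Comp C r2 r1) t = Comp C b (Comp C l2 l1)"
    using q1 q2 Comp_assoc[of t r1 r2] commsq_precomp[OF pullback_commsq[OF s2], of l1] by simp
  then show "commsq C t (Comp C l2 l1) (Comp C r2 r1) b"
    using q1 q2 unfolding commsq_def by auto
  fix x y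
  assume xy: "x \<in> Arr C" "y \<in> Arr C" "Dom C x = Dom C y" "Cod C x = Dom C (Comp C r2 r1)"
    "Cod C y = Dom C b" "Comp C (Comp C r2 r1) x = Comp C b y"
  then have "Comp C r2 (Comp C r1 x) = Comp C b y"
    using q1 q2 Comp_assoc[of x r1 r2] by simp
  then obtain v where v: "v \<in> Arr C" "Dom C v = Dom C x" "Cod C v = Dom C m"
    "Comp C m v = Comp C r1 x" "Comp C l2 v = y"
    using pullback_lift[OF s2, of "Comp C r1 x" y] xy q1 q2 by auto
  then obtain u where "u \<in> Arr C" "Dom C u = Dom C x" "Cod C u = Dom C t"
    "Comp C t u = x" "Comp C l1 u = v"
    using pullback_lift[OF s1, of x v] xy q1 q2 by auto
  with v show "\<exists>u\<in>Arr C. Dom C u = Dom C x \<and> Cod C u = Dom C t \<and>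
      Comp C t u = x \<and> Comp C (Comp C l2 l1) u = y"
    using q1 q2 Comp_assoc[of u l1 l2] by auto
next
  fix u w
  assume uw: "u \<in> Arr C" "w \<in> Arr C" "Dom C u = Dom C w" "Cod C u = Dom C t" "Cod C w = Dom C t"
    "Comp C t u = Comp C t w" "Comp C (Comp C l2 l1) u = Comp C (Comp C l2 l1) w"
  note q1 = commsqD[OF pullback_commsq[OF s1]] and q2 = commsqD[OF pullback_commsq[OF s2]]
  have "Comp C m (Comp C l1 u) = Comp C m (Comp C l1 w)"
    using commsq_precomp[OF pullback_commsq[OF s1]] uw by metis
  moreover have "Comp C l2 (Comp C l1 u) = Comp C l2 (Comp C l1 w)"
    using uw q1 q2 Comp_assoc[of u l1 l2] Comp_assoc[of w l1 l2] by simp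
  ultimately have "Comp C l1 u = Comp C l1 w"
    using pullback_jointly_monic[OF s2] uw q1 by simp
  then show "u = w"
    using pullback_jointly_monic[OF s1] uw by simp
qed

lemma pullback_cancel:
  assumes s: "pullback C t (Comp C l2 l1) (Comp C r2 r1) b" and s2: "pullback C m l2 r2 b"
    and sq: "commsq C t l1 r1 m"
  shows "pullback C t l1 r1 m"
proof (rule pullbackI)
  note q1 = commsqD[OF sq] and q2 = commsqD[OF pullback_commsq[OF s2]]
  show "commsq C t l1 r1 m" by (fact sq)
  fix x v
  assume xv: "x \<in> Arr C" "v \<in> Arr C" "Dom C x = Dom C v" "Cod C x = Dom C r1"
    "Cod C v = Dom C m" "Comp C r1 x = Comp C m v"
  then have "Comp C (Comp C r2 r1) x = Comp C b (Comp C l2 v)"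
    using q1 q2 Comp_assoc[of x r1 r2] commsq_precomp[OF pullback_commsq[OF s2], of v] by simp
  then obtain u where u: "u \<in> Arr C" "Dom C u = Dom C x" "Cod C u = Dom C t" "Comp C t u = x"
    "Comp C (Comp C l2 l1) u = Comp C l2 v"
    using pullback_lift[OF s, of x "Comp C l2 v"] xv q1 q2 by auto
  have "Comp C m (Comp C l1 u) = Comp C m v"
    using commsq_precomp[OF sq] u xv by metis
  moreover have "Comp C l2 (Comp C l1 u) = Comp C l2 v"
    using u q1 q2 Comp_assoc[of u l1 l2] by simp
  ultimately have "Comp C l1 u = v"
    using pullback_jointly_monic[OF s2] u xv q1 by simp
  with u show "\<exists>u\<in>Arr C. Dom C u = Dom C x \<and> Cod C u = Dom C t \<and>
      Comp C t u = x \<and> Comp C l1 u = v"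
    by blast
next
  fix u w
  assume uw: "u \<in> Arr C" "w \<in> Arr C" "Dom C u = Dom C w" "Cod C u = Dom C t" "Cod C w = Dom C t"
    "Comp C t u = Comp C t w" "Comp C l1 u = Comp C l1 w"
  note q1 = commsqD[OF sq] and q2 = commsqD[OF pullback_commsq[OF s2]]
  have "Comp C (Comp C l2 l1) u = Comp C (Comp C l2 l1) w"
    using uw q1 q2 Comp_assoc[of u l1 l2] Comp_assoc[of w l1 l2] by simp
  then show "u = w"
    using pullback_jointly_monic[OF s] uw by simp
qed

lemma pullback_along_mono:
  assumes m: "is_mono C m" and x: "x \<in> Arr C" "Cod C x = Dom C m"
  shows "pullback C x (Id C (Dom C x)) m (Comp C m x)"
proof (rule pullbackI)
  have "m \<in> Arr C"
    using m unfolding is_mono_def by blast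
  note arrs = this x Dom_in_Ob[OF x(1)]
  then show "commsq C x (Id C (Dom C x)) m (Comp C m x)"
    unfolding commsq_def by (auto simp: Comp_Id_right)
  fix p q
  assume pq: "p \<in> Arr C" "q \<in> Arr C" "Dom C p = Dom C q" "Cod C p = Dom C m"
    "Cod C q = Dom C (Comp C m x)" "Comp C m p = Comp C (Comp C m x) q"
  then have "Comp C m (Comp C x q) = Comp C m p"
    using arrs Comp_assoc[of q x m] by simp
  then have "Comp C x q = p"
    using m pq arrs unfolding is_mono_def by auto
  then show "\<exists>u\<in>Arr C. Dom C u = Dom C p \<and> Cod C u = Dom C x \<and> Comp C x u = p \<and>
      Comp C (Id C (Dom C x)) u = q"
    using pq arrs by (auto simp: Comp_Id_left)
next
  show "u = w" if "u \<in> Arr C" "w \<in> Arr C" "Cod C u = Dom C x" "Cod C w = Dom C x"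
    "Comp C (Id C (Dom C x)) u = Comp C (Id C (Dom C x)) w" for u w
    using that by (simp add: Comp_Id_left)
qed

lemma cube_of_pullbacks:
  assumes pbs: "has_M_pullbacks C M" and sq: "commsq C f g h k"
    and M: "f \<in> M" "h \<in> M" "k \<in> M" and d: "d \<in> Arr C" "Cod C d = Cod C h"
  obtains f2 g2 h2 k2 a2 b2 c2 where "cube C f g h k f2 g2 h2 k2 a2 b2 c2 d"
    "pullback C f2 a2 b2 f" "pullback C g2 a2 c2 g"
    "pullback C h2 b2 d h" "pullback C k2 c2 d k"
proof -
  note q = commsqD[OF sq]
  have pullback_exists: "\<exists>p r. pullback C p r x m"
    if "x \<in> Arr C" "m \<in> M" "Cod C x = Cod C m" for x m
    using pbs that unfolding has_M_pullbacks_def by blast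
  obtain h2 b2 where Ph: "pullback C h2 b2 d h"
    using pullback_exists[of d h] d M by blast
  obtain k2 c2 where Pk: "pullback C k2 c2 d k"
    using pullback_exists[of d k] d M q by auto
  note ph = commsqD[OF pullback_commsq[OF Ph]] and pk = commsqD[OF pullback_commsq[OF Pk]]
  obtain f2 a2 where Pf: "pullback C f2 a2 b2 f"
    using pullback_exists[of b2 f] ph q M by auto
  note pf = commsqD[OF pullback_commsq[OF Pf]]
  have "Comp C d (Comp C h2 f2) = Comp C k (Comp C g a2)"
    using commsq_precomp[OF pullback_commsq[OF Ph], of f2] commsq_precomp[OF sq, of a2] ph pf
    by simp
  then obtain g2 where g2: "g2 \<in> Arr C" "Dom C g2 = Dom C f2" "Cod C g2 = Dom C k2"
    "Comp C k2 g2 = Comp C h2 f2" "Comp C c2 g2 = Comp C g a2"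
    using pullback_lift[OF Pk, of "Comp C h2 f2" "Comp C g a2"] q ph pk pf by auto
  have "commsq C a2 g2 g c2"
    unfolding commsq_def using g2 q pk pf by auto
  moreover have "pullback C a2 (Comp C k2 g2) (Comp C k g) d"
    using pullback_paste[OF pullback_sym[OF Pf] pullback_sym[OF Ph]] g2(4) q(9) by simp
  ultimately have Pg: "pullback C g2 a2 c2 g"
    using pullback_cancel[OF _ pullback_sym[OF Pk]] pullback_sym by blast
  have "commsq C f2 g2 h2 k2"
    unfolding commsq_def using g2 ph pk pf by auto
  then have "cube C f g h k f2 g2 h2 k2 a2 b2 c2 d"
    unfolding cube_def using sq Pf Pg Ph Pk by (simp add: pullback_commsq)
  then show thesis
    using that Pf Pg Ph Pk by blast
qed

lemma cube_factors_through_cube_of_pullbacks: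
  assumes top2: "commsq C f2 g2 h2 k2"
    and Pf: "pullback C f2 a2 b2 f" and Pg: "pullback C g2 a2 c2 g"
    and Ph: "pullback C h2 b2 d h" and Pk: "pullback C k2 c2 d k"
    and cb: "cube C f g h k f' g' h' k' a b c d"
    and pb1: "pullback C f' a b f" and pb2: "pullback C g' a c g"
  obtains \<alpha> \<beta> \<gamma> where "cube C f2 g2 h2 k2 f' g' h' k' \<alpha> \<beta> \<gamma> (Id C (Dom C d))"
    "pullback C f' \<alpha> \<beta> f2" "pullback C g' \<alpha> \<gamma> g2"
    "Comp C h2 \<beta> = h'" "Comp C k2 \<gamma> = k'" "Comp C b2 \<beta> = b"
proof -
  note pf = commsqD[OF pullback_commsq[OF Pf]] and pg = commsqD[OF pullback_commsq[OF Pg]]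
    and ph = commsqD[OF pullback_commsq[OF Ph]] and pk = commsqD[OF pullback_commsq[OF Pk]]
  note faces = cubeD[OF cb]
  note t = commsqD[OF faces(2)] and sf = commsqD[OF faces(3)] and sg = commsqD[OF faces(4)]
    and sh = commsqD[OF faces(5)] and sk = commsqD[OF faces(6)]
  obtain \<beta> where \<beta>: "\<beta> \<in> Arr C" "Dom C \<beta> = Dom C h'" "Cod C \<beta> = Dom C h2"
    "Comp C h2 \<beta> = h'" "Comp C b2 \<beta> = b"
    using pullback_lift[OF Ph, of h' b] sh ph by auto
  obtain \<gamma> where \<gamma>: "\<gamma> \<in> Arr C" "Dom C \<gamma> = Dom C k'" "Cod C \<gamma> = Dom C k2"
    "Comp C k2 \<gamma> = k'" "Comp C c2 \<gamma> = c"
    using pullback_lift[OF Pk, of k' c] sk pk by auto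
  have "Comp C b2 (Comp C \<beta> f') = Comp C f a"
    using \<beta> sf t ph Comp_assoc[of f' \<beta> b2] by simp
  then obtain \<alpha> where \<alpha>: "\<alpha> \<in> Arr C" "Dom C \<alpha> = Dom C f'" "Cod C \<alpha> = Dom C f2"
    "Comp C f2 \<alpha> = Comp C \<beta> f'" "Comp C a2 \<alpha> = a"
    using pullback_lift[OF Pf, of "Comp C \<beta> f'" a] \<beta> sf t ph pf by auto
  have "Comp C k2 (Comp C g2 \<alpha>) = Comp C k2 (Comp C \<gamma> g')"
  proof -
    have "Comp C k2 (Comp C g2 \<alpha>) = Comp C h2 (Comp C \<beta> f')"
      using commsq_precomp[OF top2, of \<alpha>] \<alpha> by simp
    also have "\<dots> = Comp C k' g'"
      using Comp_assoc[of f' \<beta> h2] \<beta> t ph by simp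
    also have "\<dots> = Comp C k2 (Comp C \<gamma> g')"
      using Comp_assoc[of g' \<gamma> k2] \<gamma> t pk by simp
    finally show ?thesis .
  qed
  moreover have "Comp C c2 (Comp C g2 \<alpha>) = Comp C c2 (Comp C \<gamma> g')"
  proof -
    have "Comp C c2 (Comp C g2 \<alpha>) = Comp C c g'"
      using commsq_precomp[OF pullback_commsq[OF Pg], of \<alpha>] \<alpha> sg pf pg by simp
    also have "\<dots> = Comp C c2 (Comp C \<gamma> g')"
      using Comp_assoc[of g' \<gamma> c2] \<gamma> t pk by simp
    finally show ?thesis .
  qed
  ultimately have g2\<alpha>: "Comp C g2 \<alpha> = Comp C \<gamma> g'"
    using pullback_jointly_monic[OF Pk] \<alpha> \<gamma> pk pf pg t by simp
  have "Dom C d \<in> Ob C"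
    using Dom_in_Ob sh by blast
  then have faces': "commsq C f' \<alpha> \<beta> f2" "commsq C g' \<alpha> \<gamma> g2"
    "commsq C h' \<beta> (Id C (Dom C d)) h2" "commsq C k' \<gamma> (Id C (Dom C d)) k2"
    unfolding commsq_def using \<alpha> \<beta> \<gamma> g2\<alpha> pf pg ph pk sh sk t
    by (auto simp: Comp_Id_left)
  have "pullback C f' \<alpha> \<beta> f2"
    using pullback_cancel[OF _ Pf faces'(1)] pb1 \<alpha> \<beta> by simp
  moreover have "pullback C g' \<alpha> \<gamma> g2"
    using pullback_cancel[OF _ Pg faces'(2)] pb2 \<alpha> \<gamma> by simp
  ultimately show thesis
    using that faces' \<beta> \<gamma> top2 faces(2) unfolding cube_def by blast
qed

end

context
  fixes C :: "('o, 'a) cat" and M :: "'a set"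
  assumes cat: "category C" and stable: "stable_system_of_monics C M"
begin

lemma M_is_mono: "m \<in> M \<Longrightarrow> is_mono C m"
  and iso_in_M: "iso C f \<Longrightarrow> f \<in> M"
  and Comp_in_M: "f \<in> M \<Longrightarrow> g \<in> M \<Longrightarrow> Cod C f = Dom C g \<Longrightarrow> Comp C g f \<in> M"
  and pullback_in_M: "pullback C f g h k \<Longrightarrow> k \<in> M \<Longrightarrow> f \<in> M"
  using stable unfolding stable_system_of_monics_def by blast+

lemma M_decomposition:
  assumes "is_mono C m" "x \<in> Arr C" "Cod C x = Dom C m" "Comp C m x \<in> M"
  shows "x \<in> M"
  using pullback_in_M[OF pullback_along_mono[OF cat assms(1-3)] assms(4)] .

lemma Id_in_M: "x \<in> Ob C \<Longrightarrow> Id C x \<in> M"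
  using iso_in_M iso_Id[OF cat] by blast

end

context
  fixes C :: "('o, 'a) cat" and M :: "'a set"
  assumes cat: "category C"
    and stable: "stable_system_of_monics C M"
    and vert: "vertical_weak_adhesive_HLR C M"
    and stab: "M_pushouts_pullback_stable C M"
begin

lemma front_face_pullback:
  assumes po: "pushout C f g h k" and M: "f \<in> M" "g \<in> M" "h \<in> M" "k \<in> M"
    and cb: "cube C f g h k f' g' h' k' a b c d"
    and pb1: "pullback C f' a b f" and pb2: "pullback C g' a c g"
    and top: "pushout C f' g' h' k'"
  shows "pullback C h' b d h"
proof -
  have pbs: "has_M_pullbacks C M"
    and pushout_M: "\<And>f g h k. pushout C f g h k \<Longrightarrow> f \<in> M \<Longrightarrow> k \<in> M"
    and VK: "\<And>f g h k. pushout C f g h k \<Longrightarrow> f \<in> M \<Longrightarrow> vertical_weak_VK_square C M f g h k"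
    using vert unfolding vertical_weak_adhesive_HLR_def has_M_pushouts_def by blast+
  note faces = cubeD[OF cb] and sh = commsqD[OF cubeD(5)[OF cb]]
  obtain f2 g2 h2 k2 a2 b2 c2 where Q: "cube C f g h k f2 g2 h2 k2 a2 b2 c2 d"
    and P: "pullback C f2 a2 b2 f" "pullback C g2 a2 c2 g"
      "pullback C h2 b2 d h" "pullback C k2 c2 d k"
    using cube_of_pullbacks[OF cat pbs faces(1) M(1,3,4) sh(3) sh(8)[symmetric]] by metis
  have po2: "pushout C f2 g2 h2 k2"
    using stab Q po M(1) P unfolding M_pushouts_pullback_stable_def by blast
  obtain \<alpha> \<beta> \<gamma> where cb2: "cube C f2 g2 h2 k2 f' g' h' k' \<alpha> \<beta> \<gamma> (Id C (Dom C d))"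
    and pb: "pullback C f' \<alpha> \<beta> f2" "pullback C g' \<alpha> \<gamma> g2"
    and eq: "Comp C h2 \<beta> = h'" "Comp C k2 \<gamma> = k'" "Comp C b2 \<beta> = b"
    using cube_factors_through_cube_of_pullbacks[OF cat cubeD(2)[OF Q] P cb pb1 pb2] by metis
  note f2\<alpha> = commsqD[OF cubeD(3)[OF cb2]] and h2\<beta> = commsqD[OF cubeD(5)[OF cb2]]
    and k2\<gamma> = commsqD[OF cubeD(6)[OF cb2]]
  have "f' \<in> M" "g' \<in> M"
    using pullback_in_M[OF cat stable] pb1 pb2 M by blast+
  then have "h' \<in> M" "k' \<in> M"
    using pushout_M top pushout_sym[OF top] by blast+
  have "f2 \<in> M" "h2 \<in> M" "k2 \<in> M"
    using pullback_in_M[OF cat stable] P M by blast+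
  note M_decomp = M_decomposition[OF cat stable M_is_mono[OF cat stable]]
  have "\<beta> \<in> M"
    using M_decomp[OF \<open>h2 \<in> M\<close>] h2\<beta> eq \<open>h' \<in> M\<close> by simp
  moreover have "\<gamma> \<in> M"
    using M_decomp[OF \<open>k2 \<in> M\<close>] k2\<gamma> eq \<open>k' \<in> M\<close> by simp
  moreover have "\<alpha> \<in> M"
    using M_decomp[OF \<open>f2 \<in> M\<close>] f2\<alpha> Comp_in_M[OF cat stable \<open>f' \<in> M\<close> \<open>\<beta> \<in> M\<close>]
    by simp
  moreover have "Id C (Dom C d) \<in> M"
    using Id_in_M[OF cat stable] Dom_in_Ob[OF cat] sh by blast
  ultimately have "pullback C h' \<beta> (Id C (Dom C d)) h2"
    using VK[OF po2 \<open>f2 \<in> M\<close>] cb2 pb top unfolding vertical_weak_VK_square_def VK_wrt_def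
    by blast
  from pullback_paste[OF cat this P(3)] show ?thesis
    using eq(3) Comp_Id_right[OF cat] sh by simp
qed

lemma VK_square_if_all_in_M:
  assumes po: "pushout C f g h k" and M: "f \<in> M" "g \<in> M" "h \<in> M" "k \<in> M"
  shows "VK_square C f g h k"
  unfolding VK_square_def VK_wrt_def
proof (intro conjI allI impI)
  show "pushout C f g h k" by (fact po)
  fix f' g' h' k' a b c d
  assume cb: "cube C f g h k f' g' h' k' a b c d"
    and pb1: "pullback C f' a b f" and pb2: "pullback C g' a c g"
  show "pushout C f' g' h' k' \<longleftrightarrow> pullback C h' b d h \<and> pullback C k' c d k"
  proof
    assume top: "pushout C f' g' h' k'"
    show "pullback C h' b d h \<and> pullback C k' c d k"
      using front_face_pullback[OF po M cb pb1 pb2 top]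
        front_face_pullback[OF pushout_sym[OF po] M(2,1,4,3) cube_sym[OF cb] pb2 pb1
          pushout_sym[OF top]]
      by blast
  next
    assume "pullback C h' b d h \<and> pullback C k' c d k"
    then show "pushout C f' g' h' k'"
      using stab cb po M(1) pb1 pb2 unfolding M_pushouts_pullback_stable_def by blast
  qed
qed

end

theorem mainTheorem10:
  fixes C :: "('o, 'a) cat" and M :: "'a set"
  assumes "category C"
    and "stable_system_of_monics C M"
    and "vertical_weak_adhesive_HLR C M"
    and "M_pushouts_pullback_stable C M"
  shows "horizontal_weak_adhesive_HLR C M \<and> weak_adhesive_HLR C M"
proof -
  have "horizontal_weak_adhesive_HLR C M"
    using assms(3) VK_square_if_all_in_M[OF assms]
    unfolding vertical_weak_adhesive_HLR_def horizontal_weak_adhesive_HLR_def by blast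
  then show ?thesis
    using assms(3) unfolding weak_adhesive_HLR_def by blast
qed

end
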